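(* Let $\mathrm{Cl}_{p,q}$ be a non-degenerate real Clifford algebra with generators $e_1,\dots,e_n$ and extended basis $\mathbf{B}$ as below, and write $e_Le_{L'}=m_{\lambda\lambda'}e_{L\triangle L'}$ for blades $e_L,e_{L'}\in\mathbf{B}$ with ordinals $\lambda,\lambda'$. Let $S,T$ be disjoint multi-indices with $S\prec T$ (every index in $S$ smaller than every index in $T$). If $e_L,e_{L'}\in\mathbf{B}$ satisfy $e_Le_{L'}=m_{\lambda\lambda'}e_{S\triangle T}$, then there is a blade $e_M\in\mathbf{B}$ (ordinal $\mu$) with $e_Le_M=m_{\lambda\mu}e_S$ and $e_Me_{L'}=m_{\mu\lambda'}e_T$, and \[ m_{\lambda\lambda'}=m_{\lambda\mu}\,\sigma_\mu\,m_{\mu\lambda'} . \]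
   Context: Generators satisfy $e_ie_j=-e_je_i$ ($i\ne j$), $e_i^2=\sigma_i\in\{\pm1\}$. For $S=(s_1<\dots<s_m)$, $e_S=e_{s_1}\cdots e_{s_m}$, $e_\emptyset=1$. $\mathbf{B}$ lists all $2^n$ blades in a fixed total order extending $e_i\prec e_j$ for $i<j$; blades are indexed by their ordinal. Products of blades satisfy $e_Me_N=m_{MN}e_{M\triangle N}$ with $m_{MN}\in\{\pm1\}$, where $\triangle$ is symmetric difference; $\sigma_\mu=\langle e_Me_M\rangle_0\in\{\pm1\}$ for the blade $e_M$ of ordinal $\mu$. *)

theory Defs
  imports Main
begin

text \<open>Blades of Cl_{p,q} with generators e_1..e_n are indexed by their multi-index
  M, a subset of {1..n}; the ordinal labelling of the fixed order on B is immaterial,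
  so blades are identified with their index sets.  The signature is given by
  sig :: nat => int with sig i in {1,-1} (non-degenerate).\<close>

definition symdiff :: "nat set \<Rightarrow> nat set \<Rightarrow> nat set" where
  "symdiff A B = (A - B) \<union> (B - A)"

text \<open>Sign m_{MN} in e_M e_N = m_{MN} e_{M symdiff N}: bringing the word
  e_{m_1}...e_{m_k} e_{n_1}...e_{n_l} into increasing order costs one factor -1 per
  pair (i in M, j in N) with j < i (anticommutation), and each repeated generator
  contracts to e_i^2 = sig i.\<close>
definition blade_sign :: "(nat \<Rightarrow> int) \<Rightarrow> nat set \<Rightarrow> nat set \<Rightarrow> int" where
  "blade_sign sig M N =
     (-1) ^ card {(i, j). i \<in> M \<and> j \<in> N \<and> j < i} * (\<Prod>i\<in>M \<inter> N. sig i)"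

definition blade_square :: "(nat \<Rightarrow> int) \<Rightarrow> nat set \<Rightarrow> int" where
  "blade_square sig M = blade_sign sig M M"

end

theory Submission
  imports Defs
begin

text \<open>Finite index sets form a group under symmetric difference, and the sign
  m_{MN} of the blade product is a 2-cocycle on it with values in {1,-1}: both the
  inversion count and the contracted generators are additive in each argument
  modulo squares.  Associativity of the blade product in this form gives, for
  every M, the factorisation m_{LL'} m_{L \<triangle> M, M \<triangle> L'} = m_{LM} \<sigma>_M m_{ML'}.
  Choosing M = L \<triangle> S turns the two middle index sets into S and T, and
  m_{ST} = 1 because S \<prec> T leaves no inversions and S \<inter> T is empty.\<close>

lemma prod_sym_diff:
  fixes f :: "'a \<Rightarrow> 'b::comm_monoid_mult"
  assumes "finite X" "finite Y" and "\<forall>x\<in>X \<inter> Y. f x * f x = 1"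
  shows "prod f (sym_diff X Y) = prod f X * prod f Y"
proof -
  have square: "prod f (X \<inter> Y) * prod f (X \<inter> Y) = 1"
    using assms(3) by (simp add: prod.distrib [symmetric])
  have "prod f X * prod f Y = prod f (X \<union> Y) * prod f (X \<inter> Y)"
    using assms by (simp add: prod.union_inter)
  also have "\<dots> = prod f (X - Y) * prod f (Y - X) * (prod f (X \<inter> Y) * prod f (X \<inter> Y))"
    using assms by (simp add: prod.union_diff2 ac_simps)
  also have "prod f (X - Y) * prod f (Y - X) = prod f (sym_diff X Y)"
    using assms by (intro prod.union_disjoint [symmetric]) auto
  finally show ?thesis
    using square by simp
qed

definition inversions :: "nat set \<Rightarrow> nat set \<Rightarrow> (nat \<times> nat) set" where
  "inversions A B = {(i, j). i \<in> A \<and> j \<in> B \<and> j < i}"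

lemma finite_inversions: "finite A \<Longrightarrow> finite B \<Longrightarrow> finite (inversions A B)"
  by (rule finite_subset [of _ "A \<times> B"]) (auto simp: inversions_def)

lemma inversions_symdiff_left:
  "inversions (symdiff A B) C = sym_diff (inversions A C) (inversions B C)"
  unfolding inversions_def symdiff_def by auto

lemma inversions_symdiff_right:
  "inversions A (symdiff B C) = sym_diff (inversions A B) (inversions A C)"
  unfolding inversions_def symdiff_def by auto

lemma blade_sign_eq_prod:
  "blade_sign sig A B = (\<Prod>_\<in>inversions A B. -1) * prod sig (A \<inter> B)"
  unfolding blade_sign_def inversions_def by simp

lemma blade_sign_empty_left [simp]: "blade_sign sig {} B = 1"
  by (simp add: blade_sign_def)

lemma blade_sign_ordered_disjoint:
  assumes "A \<inter> B = {}" and "\<forall>a\<in>A. \<forall>b\<in>B. a < b"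
  shows "blade_sign sig A B = 1"
proof -
  have "inversions A B = {}"
    using assms(2) unfolding inversions_def by (auto dest: less_asym)
  then show ?thesis
    using assms(1) by (simp add: blade_sign_eq_prod)
qed

lemma blade_sign_mult_self:
  assumes "\<forall>i\<in>A \<inter> B. sig i * sig i = 1"
  shows "blade_sign sig A B * blade_sign sig A B = 1"
proof -
  have "prod sig (A \<inter> B) * prod sig (A \<inter> B) = 1"
    using assms by (simp add: prod.distrib [symmetric])
  moreover have "(-1::int) ^ k * (-1) ^ k = 1" for k
    by (simp add: power_add [symmetric])
  ultimately show ?thesis
    unfolding blade_sign_def by (simp add: ac_simps)
qed

lemma blade_sign_cocycle:
  assumes "finite A" "finite B" "finite C" and "\<forall>i\<in>A \<inter> B \<inter> C. sig i * sig i = 1"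
  shows "blade_sign sig A B * blade_sign sig (symdiff A B) C =
         blade_sign sig A (symdiff B C) * blade_sign sig B C"
proof -
  let ?sign = "\<lambda>X. \<Prod>_\<in>X. -1::int"
  have "?sign (inversions (symdiff A B) C) = ?sign (inversions A C) * ?sign (inversions B C)"
    unfolding inversions_symdiff_left
    by (rule prod_sym_diff) (simp_all add: assms finite_inversions)
  moreover have "?sign (inversions A (symdiff B C)) = ?sign (inversions A B) * ?sign (inversions A C)"
    unfolding inversions_symdiff_right
    by (rule prod_sym_diff) (simp_all add: assms finite_inversions)
  moreover have "prod sig (symdiff A B \<inter> C) = prod sig (A \<inter> C) * prod sig (B \<inter> C)"
  proof -
    have "symdiff A B \<inter> C = sym_diff (A \<inter> C) (B \<inter> C)"
      unfolding symdiff_def by auto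
    then show ?thesis
      using assms by (auto intro: prod_sym_diff)
  qed
  moreover have "prod sig (A \<inter> symdiff B C) = prod sig (A \<inter> B) * prod sig (A \<inter> C)"
  proof -
    have "A \<inter> symdiff B C = sym_diff (A \<inter> B) (A \<inter> C)"
      unfolding symdiff_def by auto
    then show ?thesis
      using assms by (auto intro: prod_sym_diff)
  qed
  ultimately show ?thesis
    unfolding blade_sign_eq_prod by (simp add: ac_simps)
qed

lemma blade_square_eq:
  assumes "finite M" "finite N" and "\<forall>i\<in>M. sig i * sig i = 1"
  shows "blade_square sig M = blade_sign sig M (symdiff M N) * blade_sign sig M N"
proof -
  have "symdiff M M = {}"
    unfolding symdiff_def by simp
  then show ?thesis
    using blade_sign_cocycle [of M M N sig] assms by (simp add: blade_square_def)
qed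

lemma blade_sign_factor_through:
  assumes "finite L" "finite M" "finite L'" and "\<forall>i\<in>L \<union> M \<union> L'. sig i * sig i = 1"
  shows "blade_sign sig L M * blade_square sig M * blade_sign sig M L' =
         blade_sign sig L L' * blade_sign sig (symdiff L M) (symdiff M L')"
proof -
  let ?s = "blade_sign sig"
  let ?A = "symdiff L M" and ?B = "symdiff M L'"
  have finite: "finite ?A" "finite ?B"
    using assms by (simp_all add: symdiff_def)
  have "symdiff M ?B = L'"
    unfolding symdiff_def by auto
  then have cocycle: "?s L M * ?s ?A ?B = ?s L L' * ?s M ?B"
    using blade_sign_cocycle [of L M ?B sig] assms finite by simp
  have square_M_L': "?s M L' * ?s M L' = 1"
    and square_M_B: "?s M ?B * ?s M ?B = 1"
    and square_A_B: "?s ?A ?B * ?s ?A ?B = 1"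
    using assms by (auto simp: symdiff_def intro!: blade_sign_mult_self)
  have "?s L M * blade_square sig M * ?s M L' = ?s L M * ?s M ?B * (?s M L' * ?s M L')"
    using assms blade_square_eq [of M L' sig] by (simp add: ac_simps)
  also have "\<dots> = ?s L M * ?s ?A ?B * ?s M ?B * ?s ?A ?B"
    using square_M_L' square_A_B by (simp add: ac_simps)
  also have "\<dots> = ?s L L' * ?s ?A ?B * (?s M ?B * ?s M ?B)"
    unfolding cocycle by (simp add: ac_simps)
  finally show ?thesis
    using square_M_B by simp
qed

theorem lemma2:
  fixes n :: nat and sig :: "nat \<Rightarrow> int" and S T L L' :: "nat set"
  assumes nondeg: "\<forall>i\<in>{1..n}. sig i = 1 \<or> sig i = -1"
    and S: "S \<subseteq> {1..n}" and T: "T \<subseteq> {1..n}"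
    and L: "L \<subseteq> {1..n}" and L': "L' \<subseteq> {1..n}"
    and disj: "S \<inter> T = {}"
    and prec: "\<forall>s\<in>S. \<forall>t\<in>T. s < t"
    and prod: "symdiff L L' = symdiff S T"
  shows "\<exists>M. M \<subseteq> {1..n} \<and> symdiff L M = S \<and> symdiff M L' = T \<and>
           blade_sign sig L L' = blade_sign sig L M * blade_square sig M * blade_sign sig M L'"
proof (intro exI conjI)
  define M where "M = symdiff L S"
  show M: "M \<subseteq> {1..n}"
    using L S unfolding M_def symdiff_def by auto
  show symdiff_L_M: "symdiff L M = S"
    unfolding M_def symdiff_def by auto
  have "x \<in> L' \<longleftrightarrow> (x \<in> L) \<noteq> (x \<in> S \<union> T)" for x
    using prod disj unfolding symdiff_def set_eq_iff by blast
  then show symdiff_M_L': "symdiff M L' = T"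
    using disj unfolding M_def symdiff_def by auto
  have "\<forall>i\<in>L \<union> M \<union> L'. sig i * sig i = 1"
    using nondeg L M L' by fastforce
  then have "blade_sign sig L M * blade_square sig M * blade_sign sig M L' =
             blade_sign sig L L' * blade_sign sig S T"
    using blade_sign_factor_through [of L M L' sig] L M L' symdiff_L_M symdiff_M_L'
    by (simp add: finite_subset)
  then show "blade_sign sig L L' = blade_sign sig L M * blade_square sig M * blade_sign sig M L'"
    using blade_sign_ordered_disjoint [OF disj prec] by simp
qed

end
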